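(* Let $G=(V,E,\ell)$ be a finite node-labeled directed graph, let $\mathcal{L}:V\times V\to[0,1]$ satisfy $\mathcal{L}(u,v)=1$ if and only if $\ell(u)=\ell(v)$, and let $0<w^+<1$ (with $w^-=0$). Define $F^0=\mathcal{L}$ and, for $k\ge1$, $$F^k(u,v)=w^+A^k(N^+_G(u),N^+_G(v))+(1-w^+)\mathcal{L}(u,v),$$ where for $S_1,S_2\subseteq V$: $A^k(S_1,S_2)=1$ if $S_1=S_2=\emptyset$, and otherwise $$A^k(S_1,S_2)=\frac{1}{|S_1|+|S_2|}\Big(\sum_{x\in S_1}\max_{y\in S_2}F^{k-1}(x,y)+\sum_{y\in S_2}\max_{x\in S_1}F^{k-1}(x,y)\Big),$$ with the convention that a maximum over the empty set is $0$. Then for every integer $k\ge0$ and all $u,v\in V$: $u$ and $v$ are $k$-bisimilar if and only if $F^k(u,v)=1$.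
   Context: $N^+_G(u)=\{u':(u,u')\in E\}$ is the out-neighbor set of $u$. $k$-bisimilarity is defined recursively: $u$ and $v$ are $0$-bisimilar iff $\ell(u)=\ell(v)$; for $k>0$, $u$ and $v$ are $k$-bisimilar iff (1) $\ell(u)=\ell(v)$, (2) for every $u'\in N^+_G(u)$ there is $v'\in N^+_G(v)$ such that $u'$ and $v'$ are $(k-1)$-bisimilar, and (3) for every $v'\in N^+_G(v)$ there is $u'\in N^+_G(u)$ such that $u'$ and $v'$ are $(k-1)$-bisimilar. The iteration $F^k$ is the $k$-th iterate of the paper's fractional bisimulation score $\mathrm{FSim}_b$ with $w^-=0$ on a single graph. *)

theory Defs
  imports Complex_Main
begin

definition out_nbrs :: "('v \<times> 'v) set \<Rightarrow> 'v \<Rightarrow> 'v set" where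
  "out_nbrs E u = {u'. (u, u') \<in> E}"

fun k_bisim :: "('v \<times> 'v) set \<Rightarrow> ('v \<Rightarrow> 'l) \<Rightarrow> nat \<Rightarrow> 'v \<Rightarrow> 'v \<Rightarrow> bool" where
  "k_bisim E lab 0 u v = (lab u = lab v)"
| "k_bisim E lab (Suc k) u v =
     (lab u = lab v
      \<and> (\<forall>u'\<in>out_nbrs E u. \<exists>v'\<in>out_nbrs E v. k_bisim E lab k u' v')
      \<and> (\<forall>v'\<in>out_nbrs E v. \<exists>u'\<in>out_nbrs E u. k_bisim E lab k u' v'))"

definition max0 :: "'a set \<Rightarrow> ('a \<Rightarrow> real) \<Rightarrow> real" where
  "max0 S f = (if S = {} then 0 else Max (f ` S))"

definition agg :: "('v \<Rightarrow> 'v \<Rightarrow> real) \<Rightarrow> 'v set \<Rightarrow> 'v set \<Rightarrow> real" where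
  "agg F S1 S2 =
     (if S1 = {} \<and> S2 = {} then 1
      else (1 / real (card S1 + card S2)) *
           ((\<Sum>x\<in>S1. max0 S2 (\<lambda>y. F x y)) + (\<Sum>y\<in>S2. max0 S1 (\<lambda>x. F x y))))"

fun FSim_iter :: "('v \<times> 'v) set \<Rightarrow> ('v \<Rightarrow> 'v \<Rightarrow> real) \<Rightarrow> real \<Rightarrow> nat \<Rightarrow> 'v \<Rightarrow> 'v \<Rightarrow> real" where
  "FSim_iter E L wp 0 u v = L u v"
| "FSim_iter E L wp (Suc k) u v =
     wp * agg (FSim_iter E L wp k) (out_nbrs E u) (out_nbrs E v) + (1 - wp) * L u v"

end

theory Submission
  imports Defs
begin

text \<open>All scores lie in [0,1], and a weighted mean of such scores is 1 only if every
  contributing score is 1. For the aggregate this means that every out-neighbour on either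
  side has a partner of score 1; for the convex combination with weights wp and 1 - wp it
  means that both the aggregate and the label similarity are 1. By induction on k,
  F^k(u,v) = 1 therefore unfolds into exactly the recursive clauses of k-bisimilarity.\<close>

lemma max0_bounds:
  assumes "finite S" "\<forall>y\<in>S. 0 \<le> f y \<and> f y \<le> 1"
  shows "0 \<le> max0 S f" "max0 S f \<le> 1"
  using assms by (auto simp: max0_def Max_ge_iff Max_le_iff)

lemma max0_eq_1_iff:
  assumes "finite S" "\<forall>y\<in>S. f y \<le> 1"
  shows "max0 S f = 1 \<longleftrightarrow> (\<exists>y\<in>S. f y = 1)"
proof (cases "S = {}")
  case False
  have "Max (f ` S) \<in> f ` S" and "\<forall>y\<in>S. f y \<le> Max (f ` S)"
    using False assms(1) by auto
  moreover have "Max (f ` S) \<le> 1"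
    using False assms by (simp add: Max_le_iff)
  ultimately have "Max (f ` S) = 1 \<longleftrightarrow> (\<exists>y\<in>S. f y = 1)"
    by (metis antisym imageE)
  with False show ?thesis
    by (simp add: max0_def)
qed (simp add: max0_def)

lemma sum_eq_card_iff:
  fixes g :: "'a \<Rightarrow> real"
  assumes "finite S" "\<forall>x\<in>S. g x \<le> 1"
  shows "sum g S = card S \<longleftrightarrow> (\<forall>x\<in>S. g x = 1)"
proof -
  have "sum (\<lambda>x. 1 - g x) S = card S - sum g S"
    by (simp add: sum_subtractf)
  moreover have "sum (\<lambda>x. 1 - g x) S = 0 \<longleftrightarrow> (\<forall>x\<in>S. 1 - g x = 0)"
    using assms by (intro sum_nonneg_eq_0_iff) auto
  ultimately show ?thesis
    by (metis eq_iff_diff_eq_0)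
qed

lemma sum_max0_bounds:
  assumes "finite S" "finite T" "\<forall>x\<in>S. \<forall>y\<in>T. 0 \<le> F x y \<and> F x y \<le> 1"
  shows "0 \<le> (\<Sum>x\<in>S. max0 T (F x))"
    and "(\<Sum>x\<in>S. max0 T (F x)) \<le> card S"
    and "(\<Sum>x\<in>S. max0 T (F x)) = card S \<longleftrightarrow> (\<forall>x\<in>S. \<exists>y\<in>T. F x y = 1)"
proof -
  have max0: "0 \<le> max0 T (F x) \<and> max0 T (F x) \<le> 1" if "x \<in> S" for x
    using max0_bounds[OF assms(2), of "F x"] assms(3) that by blast
  then show "0 \<le> (\<Sum>x\<in>S. max0 T (F x))"
    by (simp add: sum_nonneg)
  show "(\<Sum>x\<in>S. max0 T (F x)) \<le> card S"
    using sum_bounded_above[of S "\<lambda>x. max0 T (F x)" 1] max0 by simp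
  show "(\<Sum>x\<in>S. max0 T (F x)) = card S \<longleftrightarrow> (\<forall>x\<in>S. \<exists>y\<in>T. F x y = 1)"
    using assms max0 by (simp add: sum_eq_card_iff max0_eq_1_iff)
qed

lemma agg_bounds:
  assumes "finite S1" "finite S2" "\<forall>x\<in>S1. \<forall>y\<in>S2. 0 \<le> F x y \<and> F x y \<le> 1"
  shows "0 \<le> agg F S1 S2" "agg F S1 S2 \<le> 1"
proof -
  have "\<forall>y\<in>S2. \<forall>x\<in>S1. 0 \<le> F x y \<and> F x y \<le> 1"
    using assms(3) by blast
  note sums = sum_max0_bounds[OF assms] sum_max0_bounds[OF assms(2,1) this]
  show "0 \<le> agg F S1 S2" "agg F S1 S2 \<le> 1"
    using sums(1,2,4,5) by (auto simp: agg_def divide_le_eq_1)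
qed

lemma agg_eq_1_iff:
  assumes "finite S1" "finite S2" "\<forall>x\<in>S1. \<forall>y\<in>S2. 0 \<le> F x y \<and> F x y \<le> 1"
  shows "agg F S1 S2 = 1 \<longleftrightarrow>
    (\<forall>x\<in>S1. \<exists>y\<in>S2. F x y = 1) \<and> (\<forall>y\<in>S2. \<exists>x\<in>S1. F x y = 1)"
proof (cases "S1 = {} \<and> S2 = {}")
  case False
  have "\<forall>y\<in>S2. \<forall>x\<in>S1. 0 \<le> F x y \<and> F x y \<le> 1"
    using assms(3) by blast
  note sums = sum_max0_bounds[OF assms] sum_max0_bounds[OF assms(2,1) this]
  have "0 < card S1 + card S2"
    using False assms(1,2) by auto
  then have "agg F S1 S2 = 1 \<longleftrightarrow>
      (\<Sum>x\<in>S1. max0 S2 (F x)) + (\<Sum>y\<in>S2. max0 S1 (\<lambda>x. F x y)) = card S1 + card S2"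
    using False by (auto simp: agg_def)
  also have "\<dots> \<longleftrightarrow>
      (\<Sum>x\<in>S1. max0 S2 (F x)) = card S1 \<and> (\<Sum>y\<in>S2. max0 S1 (\<lambda>x. F x y)) = card S2"
    using sums(2,5) by linarith
  finally show ?thesis
    using sums(3,6) by simp
qed (simp add: agg_def)

lemma convex_comb_bounds:
  fixes w a b :: real
  assumes "0 \<le> w" "w \<le> 1" "0 \<le> a" "a \<le> 1" "0 \<le> b" "b \<le> 1"
  shows "0 \<le> w * a + (1 - w) * b" "w * a + (1 - w) * b \<le> 1"
  using assms mult_left_le[of a w] mult_left_le[of b "1 - w"] by auto

lemma convex_comb_eq_1_iff:
  fixes w a b :: real
  assumes "0 < w" "w < 1" "a \<le> 1" "b \<le> 1"
  shows "w * a + (1 - w) * b = 1 \<longleftrightarrow> a = 1 \<and> b = 1"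
proof
  assume sum: "w * a + (1 - w) * b = 1"
  have "w * a \<le> w" "(1 - w) * b \<le> 1 - w"
    using assms by simp_all
  then have "w * a = w" "(1 - w) * b = 1 - w"
    using sum by linarith+
  then show "a = 1 \<and> b = 1"
    using assms by simp
qed simp

context
  fixes V :: "'v set" and E :: "('v \<times> 'v) set"
  assumes finite_V: "finite V" and E_sub: "E \<subseteq> V \<times> V"
begin

lemma out_nbrs_subset: "out_nbrs E u \<subseteq> V"
  using E_sub by (auto simp: out_nbrs_def)

lemma finite_out_nbrs: "finite (out_nbrs E u)"
  using out_nbrs_subset finite_V by (rule finite_subset)

lemma FSim_iter_bounds:
  assumes "\<forall>u\<in>V. \<forall>v\<in>V. 0 \<le> L u v \<and> L u v \<le> 1" "0 \<le> wp" "wp \<le> 1"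
  shows "\<forall>u\<in>V. \<forall>v\<in>V. 0 \<le> FSim_iter E L wp k u v \<and> FSim_iter E L wp k u v \<le> 1"
proof (induction k)
  case (Suc k)
  show ?case
  proof (intro ballI)
    fix u v assume "u \<in> V" "v \<in> V"
    have "\<forall>x\<in>out_nbrs E u. \<forall>y\<in>out_nbrs E v.
        0 \<le> FSim_iter E L wp k x y \<and> FSim_iter E L wp k x y \<le> 1"
      using Suc.IH out_nbrs_subset by blast
    note agg = agg_bounds[OF finite_out_nbrs finite_out_nbrs this]
    show "0 \<le> FSim_iter E L wp (Suc k) u v \<and> FSim_iter E L wp (Suc k) u v \<le> 1"
      using convex_comb_bounds[OF assms(2,3) agg] assms(1) \<open>u \<in> V\<close> \<open>v \<in> V\<close> by simp
  qed
qed (use assms(1) in simp)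

lemma k_bisim_iff_FSim_iter_eq_1:
  assumes L_bounds: "\<forall>u\<in>V. \<forall>v\<in>V. 0 \<le> L u v \<and> L u v \<le> 1"
    and L_eq_1: "\<forall>u\<in>V. \<forall>v\<in>V. L u v = 1 \<longleftrightarrow> lab u = lab v"
    and "0 < wp" "wp < 1"
  shows "\<forall>u\<in>V. \<forall>v\<in>V. k_bisim E lab k u v \<longleftrightarrow> FSim_iter E L wp k u v = 1"
proof (induction k)
  case (Suc k)
  show ?case
  proof (intro ballI)
    fix u v assume "u \<in> V" "v \<in> V"
    let ?F = "FSim_iter E L wp k" and ?N = "out_nbrs E"
    have bounds: "\<forall>x\<in>?N u. \<forall>y\<in>?N v. 0 \<le> ?F x y \<and> ?F x y \<le> 1"
    proof -
      have "\<forall>x\<in>V. \<forall>y\<in>V. 0 \<le> ?F x y \<and> ?F x y \<le> 1"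
        using FSim_iter_bounds[OF L_bounds] assms(3,4) by simp
      then show ?thesis
        using out_nbrs_subset by blast
    qed
    have IH: "k_bisim E lab k x y \<longleftrightarrow> ?F x y = 1" if "x \<in> ?N u" "y \<in> ?N v" for x y
      using Suc.IH that out_nbrs_subset by blast
    have "FSim_iter E L wp (Suc k) u v = 1 \<longleftrightarrow> agg ?F (?N u) (?N v) = 1 \<and> L u v = 1"
      using convex_comb_eq_1_iff[OF assms(3,4)] agg_bounds[OF finite_out_nbrs finite_out_nbrs bounds]
        L_bounds \<open>u \<in> V\<close> \<open>v \<in> V\<close> by simp
    also have "\<dots> \<longleftrightarrow> k_bisim E lab (Suc k) u v"
      using agg_eq_1_iff[OF finite_out_nbrs finite_out_nbrs bounds] IH L_eq_1 \<open>u \<in> V\<close> \<open>v \<in> V\<close>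
      by auto
    finally show "k_bisim E lab (Suc k) u v \<longleftrightarrow> FSim_iter E L wp (Suc k) u v = 1" ..
  qed
qed (use L_eq_1 in simp)

end

theorem theorem4:
  fixes V :: "'v set" and E :: "('v \<times> 'v) set" and lab :: "'v \<Rightarrow> 'l"
    and L :: "'v \<Rightarrow> 'v \<Rightarrow> real" and wp :: real
  assumes "finite V"
    and "E \<subseteq> V \<times> V"
    and "\<forall>u\<in>V. \<forall>v\<in>V. 0 \<le> L u v \<and> L u v \<le> 1"
    and "\<forall>u\<in>V. \<forall>v\<in>V. L u v = 1 \<longleftrightarrow> lab u = lab v"
    and "0 < wp" and "wp < 1"
  shows "\<forall>k::nat. \<forall>u\<in>V. \<forall>v\<in>V. k_bisim E lab k u v \<longleftrightarrow> FSim_iter E L wp k u v = 1"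
  using k_bisim_iff_FSim_iter_eq_1[OF assms] by blast

end
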